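(* Let $n\geq 1$, let $T,T'$ be Jacobi subsets of $S_n$, and let $H\subseteq G$ be subgroups of $S_n$. Then: (1) If $T\cap T'=\emptyset$, then $T\cup T'$ is Jacobi. (2) $\sigma T=\{\sigma\circ\tau\mid \tau\in T\}$ is Jacobi for any $\sigma\in S_n$. (3) If $n\geq 2$, then $T(1,2)=\{\tau\circ(1,2)\mid\tau\in T\}$ is Jacobi, where $(1,2)\in S_n$ is the transposition. (4) If $n\leq m$, then $\iota_{n,m}(T)$ is a Jacobi subset of $S_m$. (5) If $H$ is Jacobi, then $G$ is Jacobi. (6) If $n\geq 2$ and $(1,2)\in G$, then $G$ is Jacobi. (7) If $n\geq 3$ and the $3$-cycle $(1,2,3)\in G$, then $G$ is Jacobi.
   Context: A Lie ring is a Lie algebra over $\mathbb Z$. The left-normed bracket is defined recursively by $[a_1]=a_1$ and $[a_1,\dots,a_n]=[[a_1,\dots,a_{n-1}],a_n]$. $S_n$ is the symmetric group on $\{1,\dots,n\}$, with product given by composition, $(\sigma\tau)(i)=\sigma(\tau(i))$. A subset $T\subseteq S_n$ is called Jacobi if $\sum_{\sigma\in T}[a_{\sigma(1)},\dots,a_{\sigma(n)}]=0$ for all elements $a_1,\dots,a_n$ of every Lie ring. For $n\leq m$, $\iota_{n,m}:S_n\hookrightarrow S_m$ is the canonical embedding (permutations of $\{1,\dots,n\}$ extended by fixing $n+1,\dots,m$). *)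

theory Defs
  imports "HOL-Combinatorics.Combinatorics"
begin

text \<open>Lie rings = Lie algebras over the integers: an abelian group with a biadditive,
  alternating bracket satisfying the Jacobi identity (Z-bilinearity follows from biadditivity).\<close>
class lie_ring = ab_group_add +
  fixes lie_bracket :: "'a \<Rightarrow> 'a \<Rightarrow> 'a"
  assumes bracket_add_left: "lie_bracket (x + y) z = lie_bracket x z + lie_bracket y z"
    and bracket_add_right: "lie_bracket x (y + z) = lie_bracket x y + lie_bracket x z"
    and bracket_alt: "lie_bracket x x = 0"
    and bracket_jacobi: "lie_bracket (lie_bracket x y) z + lie_bracket (lie_bracket y z) x
                         + lie_bracket (lie_bracket z x) y = 0"

fun lnb :: "'a::lie_ring list \<Rightarrow> 'a" where
  "lnb [] = 0"
| "lnb (b # bs) = foldl lie_bracket b bs"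

definition Sym :: "nat \<Rightarrow> (nat \<Rightarrow> nat) set" where
  "Sym n = {\<sigma>. \<sigma> permutes {1..n}}"

definition perm_bracket :: "nat \<Rightarrow> (nat \<Rightarrow> 'a::lie_ring) \<Rightarrow> (nat \<Rightarrow> nat) \<Rightarrow> 'a" where
  "perm_bracket n a \<sigma> = lnb (map (\<lambda>i. a (\<sigma> i)) [1..<n+1])"

text \<open>T \<subseteq> S_n is Jacobi (w.r.t. all Lie rings carried by the type 'a).\<close>
definition jacobi :: "'a::lie_ring itself \<Rightarrow> nat \<Rightarrow> (nat \<Rightarrow> nat) set \<Rightarrow> bool" where
  "jacobi _ n T \<longleftrightarrow> T \<subseteq> Sym n \<and> (\<forall>a :: nat \<Rightarrow> 'a. (\<Sum>\<sigma>\<in>T. perm_bracket n a \<sigma>) = 0)"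

definition sym_subgroup :: "nat \<Rightarrow> (nat \<Rightarrow> nat) set \<Rightarrow> bool" where
  "sym_subgroup n H \<longleftrightarrow> H \<subseteq> Sym n \<and> id \<in> H \<and> (\<forall>\<sigma>\<in>H. \<forall>\<tau>\<in>H. \<sigma> \<circ> \<tau> \<in> H)
     \<and> (\<forall>\<sigma>\<in>H. inv \<sigma> \<in> H)"

definition iota :: "nat \<Rightarrow> (nat \<Rightarrow> nat) \<Rightarrow> (nat \<Rightarrow> nat)" where
  "iota n \<sigma> = (\<lambda>i. if i \<in> {1..n} then \<sigma> i else i)"

definition cyc123 :: "nat \<Rightarrow> nat" where
  "cyc123 i = (if i = 1 then 2 else if i = 2 then 3 else if i = 3 then 1 else i)"

end

theory Submission
  imports Defs
begin

text \<open>Left translation by \<open>\<sigma>\<close> only renames the variables \<open>a\<^sub>i\<close>, giving (2); swapping the first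
  two entries of a left-normed bracket changes its sign, giving (3); and bracketing further with
  \<open>a\<^sub>n\<^sub>+\<^sub>1, \<dots>, a\<^sub>m\<close> is additive, giving (4). A group \<open>G\<close> is the disjoint union of the left cosets
  \<open>gH\<close> of a subgroup \<open>H\<close>, each Jacobi by (2) if \<open>H\<close> is, giving (5). Finally \<open>{id, (1,2)}\<close> is Jacobi
  by anticommutativity and \<open>{id, (1,2,3), (1,3,2)}\<close> by the Jacobi identity, so (5) gives (6), (7).\<close>

lemma lie_bracket_zero_left: "lie_bracket (0::'a::lie_ring) y = 0"
  using bracket_add_left[of "0::'a" 0 y] by simp

lemma lie_bracket_minus_left: "lie_bracket (- x::'a::lie_ring) y = - lie_bracket x y"
proof -
  have "lie_bracket x y + lie_bracket (-x) y = 0"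
    using bracket_add_left[of x "-x" y] lie_bracket_zero_left[of y] by simp
  then show ?thesis by (simp add: eq_neg_iff_add_eq_0 add.commute)
qed

lemma lie_bracket_anticomm: "lie_bracket (y::'a::lie_ring) x = - lie_bracket x y"
proof -
  have "lie_bracket (x + y) (x + y) = 0" by (rule bracket_alt)
  then have "lie_bracket x x + lie_bracket y x + (lie_bracket x y + lie_bracket y y) = 0"
    by (simp only: bracket_add_left bracket_add_right)
  then have "lie_bracket x y + lie_bracket y x = 0"
    by (simp add: bracket_alt add.commute)
  then show ?thesis by (simp add: eq_neg_iff_add_eq_0 add.commute)
qed

lemma foldl_lie_bracket_add:
  "foldl lie_bracket ((x::'a::lie_ring) + y) zs = foldl lie_bracket x zs + foldl lie_bracket y zs"
  by (induct zs arbitrary: x y) (simp_all add: bracket_add_left)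

lemma foldl_lie_bracket_zero: "foldl lie_bracket (0::'a::lie_ring) zs = 0"
  by (induct zs) (simp_all add: lie_bracket_zero_left)

lemma foldl_lie_bracket_minus: "foldl lie_bracket (- x::'a::lie_ring) zs = - foldl lie_bracket x zs"
  by (induct zs arbitrary: x) (simp_all add: lie_bracket_minus_left)

lemma foldl_lie_bracket_sum:
  "finite A \<Longrightarrow> foldl lie_bracket (\<Sum>i\<in>A. f i :: 'a::lie_ring) zs = (\<Sum>i\<in>A. foldl lie_bracket (f i) zs)"
  by (induct A rule: finite_induct) (simp_all add: foldl_lie_bracket_zero foldl_lie_bracket_add)

lemma lnb_append: "xs \<noteq> [] \<Longrightarrow> lnb (xs @ ys) = foldl lie_bracket (lnb xs) ys"
  by (cases xs) auto

lemma finite_Sym: "finite (Sym n)"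
  unfolding Sym_def by (rule finite_permutations) simp

lemma jacobi_imp_finite: "jacobi R n T \<Longrightarrow> finite T"
  unfolding jacobi_def using finite_Sym finite_subset by blast

lemma jacobiI:
  assumes "T \<subseteq> Sym n" and "\<And>a :: nat \<Rightarrow> 'a. (\<Sum>\<sigma>\<in>T. perm_bracket n a \<sigma>) = 0"
  shows "jacobi (R :: 'a::lie_ring itself) n T"
  using assms unfolding jacobi_def by blast

lemma jacobiD:
  fixes R :: "'a::lie_ring itself" and a :: "nat \<Rightarrow> 'a"
  shows "jacobi R n T \<Longrightarrow> (\<Sum>\<sigma>\<in>T. perm_bracket n a \<sigma>) = 0"
  unfolding jacobi_def by blast

lemma jacobi_subset_Sym: "jacobi R n T \<Longrightarrow> T \<subseteq> Sym n"
  unfolding jacobi_def by blast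

lemma perm_bracket_comp: "perm_bracket n a (\<sigma> \<circ> \<tau>) = perm_bracket n (a \<circ> \<sigma>) \<tau>"
  by (simp add: perm_bracket_def)

lemma transpose12_in_Sym: "n \<ge> 2 \<Longrightarrow> transpose 1 2 \<in> Sym n"
  unfolding Sym_def by (simp, intro permutes_swap_id) auto

lemma perm_bracket_comp_transpose12:
  assumes "n \<ge> 2"
  shows "perm_bracket n a (\<tau> \<circ> transpose 1 2) = - perm_bracket n a \<tau>"
proof -
  have upt: "[1..<n+1] = 1 # 2 # [3..<n+1]"
    using assms by (simp add: upt_conv_Cons numeral_3_eq_3 del: upt_Suc)
  have tail: "map (\<lambda>i. a ((\<tau> \<circ> transpose 1 2) i)) [3..<n+1] = map (\<lambda>i. a (\<tau> i)) [3..<n+1]"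
    by (rule map_cong) auto
  show ?thesis
    unfolding perm_bracket_def upt list.map lnb.simps foldl_Cons tail
    by (simp add: lie_bracket_anticomm[of "a (\<tau> 2)"] foldl_lie_bracket_minus)
qed

lemma perm_bracket_extend:
  assumes "\<tau> permutes {1..n}" and "1 \<le> n" and "n \<le> m"
  shows "perm_bracket m a \<tau> = foldl lie_bracket (perm_bracket n a \<tau>) (map a [n+1..<m+1])"
proof -
  have upt: "[1..<m+1] = [1..<n+1] @ [n+1..<m+1]"
    using upt_add_eq_append[of 1 "n+1" "m-n"] assms(3) by simp
  have tail: "map (\<lambda>i. a (\<tau> i)) [n+1..<m+1] = map a [n+1..<m+1]"
    by (rule map_cong) (auto simp: permutes_not_in[OF assms(1)])
  have nonempty: "map (\<lambda>i. a (\<tau> i)) [1..<n+1] \<noteq> []" using assms(2) by simp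
  show ?thesis
    unfolding perm_bracket_def upt map_append tail lnb_append[OF nonempty] ..
qed

lemma iota_permutes: "\<tau> permutes {1..n} \<Longrightarrow> iota n \<tau> = \<tau>"
  unfolding iota_def by (auto simp: fun_eq_iff permutes_not_in)

lemma jacobi_Un:
  "jacobi R n T \<Longrightarrow> jacobi R n T' \<Longrightarrow> T \<inter> T' = {} \<Longrightarrow> jacobi R n (T \<union> T')"
  using jacobi_imp_finite[of R n T] jacobi_imp_finite[of R n T']
  unfolding jacobi_def by (simp add: sum.union_disjoint)

lemma jacobi_left_translate:
  assumes J: "jacobi R n T" and \<sigma>: "\<sigma> \<in> Sym n"
  shows "jacobi R n ((\<lambda>\<tau>. \<sigma> \<circ> \<tau>) ` T)"
proof (rule jacobiI)
  have \<sigma>_perm: "\<sigma> permutes {1..n}" using \<sigma> by (simp add: Sym_def)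
  then have inj: "inj_on (\<lambda>\<tau>. \<sigma> \<circ> \<tau>) T"
    by (intro inj_onI) (simp add: fun_eq_iff permutes_inj[THEN inj_eq])
  show "(\<lambda>\<tau>. \<sigma> \<circ> \<tau>) ` T \<subseteq> Sym n"
    using jacobi_subset_Sym[OF J] \<sigma>_perm unfolding Sym_def by (auto intro: permutes_compose)
  fix a :: "nat \<Rightarrow> 'a"
  show "(\<Sum>\<tau>\<in>(\<lambda>\<tau>. \<sigma> \<circ> \<tau>) ` T. perm_bracket n a \<tau>) = 0"
    by (simp add: sum.reindex[OF inj] perm_bracket_comp jacobiD[OF J])
qed

lemma jacobi_right_transpose12:
  assumes J: "jacobi R n T" and n: "n \<ge> 2"
  shows "jacobi R n ((\<lambda>\<tau>. \<tau> \<circ> transpose 1 2) ` T)"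
proof (rule jacobiI)
  have inj: "inj_on (\<lambda>\<tau>. \<tau> \<circ> transpose 1 2) T"
    by (rule inj_onI) (metis transpose_comp_involutory comp_assoc comp_id)
  show "(\<lambda>\<tau>. \<tau> \<circ> transpose 1 2) ` T \<subseteq> Sym n"
    using jacobi_subset_Sym[OF J] transpose12_in_Sym[OF n]
    unfolding Sym_def by (auto intro: permutes_compose)
  fix a :: "nat \<Rightarrow> 'a"
  show "(\<Sum>\<tau>\<in>(\<lambda>\<tau>. \<tau> \<circ> transpose 1 2) ` T. perm_bracket n a \<tau>) = 0"
  proof -
    have "(\<Sum>\<tau>\<in>(\<lambda>\<tau>. \<tau> \<circ> transpose 1 2) ` T. perm_bracket n a \<tau>) = (\<Sum>\<tau>\<in>T. - perm_bracket n a \<tau>)"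
      unfolding sum.reindex[OF inj]
      by (rule sum.cong) (simp_all only: comp_apply perm_bracket_comp_transpose12[OF n])
    then show ?thesis by (simp add: sum_negf jacobiD[OF J])
  qed
qed

lemma jacobi_iota:
  assumes J: "jacobi R n T" and n: "1 \<le> n" and m: "n \<le> m"
  shows "jacobi R m (iota n ` T)"
proof -
  have perm: "\<tau> permutes {1..n}" if "\<tau> \<in> T" for \<tau>
    using jacobi_subset_Sym[OF J] that by (auto simp: Sym_def)
  then have "iota n ` T = T" by (simp add: iota_permutes)
  moreover have "jacobi R m T"
  proof (rule jacobiI)
    show "T \<subseteq> Sym m"
      using permutes_subset[OF perm] m unfolding Sym_def by fastforce
    fix a :: "nat \<Rightarrow> 'a"
    have "(\<Sum>\<tau>\<in>T. perm_bracket m a \<tau>)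
        = (\<Sum>\<tau>\<in>T. foldl lie_bracket (perm_bracket n a \<tau>) (map a [n+1..<m+1]))"
      by (rule sum.cong) (simp_all add: perm_bracket_extend[OF perm n m])
    also have "\<dots> = foldl lie_bracket (\<Sum>\<tau>\<in>T. perm_bracket n a \<tau>) (map a [n+1..<m+1])"
      by (rule foldl_lie_bracket_sum[symmetric, OF jacobi_imp_finite[OF J]])
    also have "\<dots> = 0" by (simp only: jacobiD[OF J] foldl_lie_bracket_zero)
    finally show "(\<Sum>\<tau>\<in>T. perm_bracket m a \<tau>) = 0" .
  qed
  ultimately show ?thesis by simp
qed

lemma left_coset_subset:
  assumes H: "sym_subgroup n H" and h1: "h1 \<in> H" and h2: "h2 \<in> H"
    and eq: "g1 \<circ> h1 = g2 \<circ> h2"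
  shows "(\<lambda>h. g2 \<circ> h) ` H \<subseteq> (\<lambda>h. g1 \<circ> h) ` H"
proof
  fix x assume "x \<in> (\<lambda>h. g2 \<circ> h) ` H"
  then obtain h where h: "h \<in> H" and x: "x = g2 \<circ> h" by blast
  have "h2 permutes {1..n}" using H h2 unfolding sym_subgroup_def Sym_def by auto
  then have "g2 = g2 \<circ> (h2 \<circ> inv h2)" by (simp add: permutes_inv_o(1))
  also have "\<dots> = g1 \<circ> (h1 \<circ> inv h2)" using eq by (simp add: comp_assoc[symmetric])
  finally have "x = g1 \<circ> (h1 \<circ> inv h2 \<circ> h)" using x by (simp add: comp_assoc)
  moreover have "h1 \<circ> inv h2 \<circ> h \<in> H" using H h1 h2 h unfolding sym_subgroup_def by blast
  ultimately show "x \<in> (\<lambda>h. g1 \<circ> h) ` H" by blast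
qed

lemma left_cosets_disjoint:
  assumes "sym_subgroup n H" and "(\<lambda>h. g1 \<circ> h) ` H \<noteq> (\<lambda>h. g2 \<circ> h) ` H"
  shows "(\<lambda>h. g1 \<circ> h) ` H \<inter> (\<lambda>h. g2 \<circ> h) ` H = {}"
proof (rule ccontr)
  assume "(\<lambda>h. g1 \<circ> h) ` H \<inter> (\<lambda>h. g2 \<circ> h) ` H \<noteq> {}"
  then obtain h1 h2 where "h1 \<in> H" "h2 \<in> H" "g1 \<circ> h1 = g2 \<circ> h2" by blast
  then show False
    using assms left_coset_subset[of n H h1 h2 g1 g2] left_coset_subset[of n H h2 h1 g2 g1]
    by auto
qed

lemma jacobi_subgroup_mono:
  assumes J: "jacobi R n H" and H: "sym_subgroup n H"
    and G: "sym_subgroup n G" and HG: "H \<subseteq> G"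
  shows "jacobi R n G"
proof (rule jacobiI)
  define C where "C = (\<lambda>g. (\<lambda>h. g \<circ> h) ` H) ` G"
  show GS: "G \<subseteq> Sym n" using G unfolding sym_subgroup_def by blast
  have union: "\<Union>C = G"
  proof
    show "\<Union>C \<subseteq> G" using G HG unfolding C_def sym_subgroup_def by blast
    show "G \<subseteq> \<Union>C"
    proof
      fix g assume "g \<in> G"
      moreover have "g = g \<circ> id" by simp
      ultimately show "g \<in> \<Union>C" using H unfolding C_def sym_subgroup_def by blast
    qed
  qed
  have finite: "\<forall>A\<in>C. finite A" using jacobi_imp_finite[OF J] unfolding C_def by blast
  have disjoint: "\<forall>A\<in>C. \<forall>B\<in>C. A \<noteq> B \<longrightarrow> A \<inter> B = {}"
    unfolding C_def using left_cosets_disjoint[OF H] by blast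
  have coset_jacobi: "jacobi R n A" if "A \<in> C" for A
    using that jacobi_left_translate[OF J] GS unfolding C_def by blast
  fix a :: "nat \<Rightarrow> 'a"
  have "(\<Sum>\<sigma>\<in>G. perm_bracket n a \<sigma>) = (\<Sum>A\<in>C. \<Sum>\<sigma>\<in>A. perm_bracket n a \<sigma>)"
    using sum.Union_disjoint[OF finite disjoint] unfolding union by simp
  also have "\<dots> = 0" using coset_jacobi jacobiD by (intro sum.neutral) blast
  finally show "(\<Sum>\<sigma>\<in>G. perm_bracket n a \<sigma>) = 0" .
qed

lemma sym_subgroup_transpose12: "n \<ge> 2 \<Longrightarrow> sym_subgroup n {id, transpose 1 2}"
  using transpose12_in_Sym[of n] unfolding sym_subgroup_def Sym_def
  by (auto simp: permutes_id)

lemma jacobi_transpose12_subgroup: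
  assumes n: "n \<ge> 2"
  shows "jacobi R n {id, transpose 1 2}"
proof (rule jacobiI)
  show "{id, transpose 1 2} \<subseteq> Sym n"
    using sym_subgroup_transpose12[OF n] unfolding sym_subgroup_def by blast
  have "id \<noteq> transpose (1::nat) 2" by (auto simp: fun_eq_iff intro!: exI[of _ 1])
  moreover have "perm_bracket n a (transpose 1 2) = - perm_bracket n a id" for a :: "nat \<Rightarrow> 'a"
    using perm_bracket_comp_transpose12[OF n, of a id] by simp
  ultimately show "(\<Sum>\<sigma>\<in>{id, transpose 1 2}. perm_bracket n a \<sigma>) = 0" for a :: "nat \<Rightarrow> 'a"
    by simp
qed

lemma cyc123_eq_transpose: "cyc123 = transpose 1 2 \<circ> transpose 2 3"
  by (rule ext) (simp add: cyc123_def transpose_def)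

lemma cyc123_permutes: "cyc123 permutes {1..3}"
  unfolding cyc123_eq_transpose by (intro permutes_compose permutes_swap_id) auto

lemma cyc123_cube: "cyc123 \<circ> (cyc123 \<circ> cyc123) = id" "cyc123 \<circ> cyc123 \<circ> cyc123 = id"
  by (rule ext, simp add: cyc123_def)+

lemma sym_subgroup_cyc123:
  assumes "n \<ge> 3"
  shows "sym_subgroup n {id, cyc123, cyc123 \<circ> cyc123}"
proof -
  let ?c = cyc123
  have c: "?c permutes {1..n}"
    using permutes_subset[OF cyc123_permutes] assms by auto
  have inv_c: "inv ?c = ?c \<circ> ?c" and inv_cc: "inv (?c \<circ> ?c) = ?c"
    by (rule inv_unique_comp; simp add: cyc123_cube comp_assoc)+
  have "?c \<circ> ?c \<circ> (?c \<circ> ?c) = ?c"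
    by (rule ext) (simp add: cyc123_def)
  then show ?thesis
    unfolding sym_subgroup_def Sym_def
    using c permutes_compose[OF c c] inv_c inv_cc cyc123_cube
    by (auto simp: comp_assoc permutes_id)
qed

lemma jacobi_cyc123_subgroup_3: "jacobi R 3 {id, cyc123, cyc123 \<circ> cyc123}"
proof (rule jacobiI)
  let ?c = cyc123
  show "{id, ?c, ?c \<circ> ?c} \<subseteq> Sym 3"
    using sym_subgroup_cyc123[of 3] unfolding sym_subgroup_def by blast
  have distinct: "id \<noteq> ?c" "id \<noteq> ?c \<circ> ?c" "?c \<noteq> ?c \<circ> ?c"
    by (auto simp: fun_eq_iff cyc123_def intro!: exI[of _ 1])
  have upt: "[1..<3+1] = [1, 2, 3::nat]" by (simp add: upt_rec)
  fix a :: "nat \<Rightarrow> 'a"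
  have "(\<Sum>\<sigma>\<in>{id, ?c, ?c \<circ> ?c}. perm_bracket 3 a \<sigma>)
      = lie_bracket (lie_bracket (a 1) (a 2)) (a 3) + lie_bracket (lie_bracket (a 2) (a 3)) (a 1)
        + lie_bracket (lie_bracket (a 3) (a 1)) (a 2)"
    using distinct unfolding perm_bracket_def upt by (simp add: cyc123_def add.assoc)
  also have "\<dots> = 0" by (rule bracket_jacobi)
  finally show "(\<Sum>\<sigma>\<in>{id, ?c, ?c \<circ> ?c}. perm_bracket 3 a \<sigma>) = 0" .
qed

lemma jacobi_cyc123_subgroup:
  assumes "n \<ge> 3"
  shows "jacobi R n {id, cyc123, cyc123 \<circ> cyc123}"
proof -
  have "iota 3 ` {id, cyc123, cyc123 \<circ> cyc123} = {id, cyc123, cyc123 \<circ> cyc123}"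
    using cyc123_permutes permutes_compose[OF cyc123_permutes cyc123_permutes]
    by (simp add: iota_permutes permutes_id)
  then show ?thesis
    using jacobi_iota[OF jacobi_cyc123_subgroup_3 _ assms] by simp
qed

theorem lemma1:
  fixes R :: "'a::lie_ring itself" and n :: nat and T T' H G :: "(nat \<Rightarrow> nat) set"
  assumes "n \<ge> 1"
    and "jacobi R n T" and "jacobi R n T'"
    and "sym_subgroup n H" and "sym_subgroup n G" and "H \<subseteq> G"
  shows "(T \<inter> T' = {} \<longrightarrow> jacobi R n (T \<union> T'))
    \<and> (\<forall>\<sigma>\<in>Sym n. jacobi R n ((\<lambda>\<tau>. \<sigma> \<circ> \<tau>) ` T))
    \<and> (n \<ge> 2 \<longrightarrow> jacobi R n ((\<lambda>\<tau>. \<tau> \<circ> transpose 1 2) ` T))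
    \<and> (\<forall>m. n \<le> m \<longrightarrow> jacobi R m (iota n ` T))
    \<and> (jacobi R n H \<longrightarrow> jacobi R n G)
    \<and> (n \<ge> 2 \<and> transpose 1 2 \<in> G \<longrightarrow> jacobi R n G)
    \<and> (n \<ge> 3 \<and> cyc123 \<in> G \<longrightarrow> jacobi R n G)"
proof (intro conjI impI ballI allI)
  show "T \<inter> T' = {} \<Longrightarrow> jacobi R n (T \<union> T')"
    using assms(2,3) by (rule jacobi_Un)
  show "jacobi R n ((\<lambda>\<tau>. \<sigma> \<circ> \<tau>) ` T)" if "\<sigma> \<in> Sym n" for \<sigma>
    using assms(2) that by (rule jacobi_left_translate)
  show "n \<ge> 2 \<Longrightarrow> jacobi R n ((\<lambda>\<tau>. \<tau> \<circ> transpose 1 2) ` T)"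
    using assms(2) by (rule jacobi_right_transpose12)
  show "n \<le> m \<Longrightarrow> jacobi R m (iota n ` T)" for m
    using assms(2,1) by (rule jacobi_iota)
  show "jacobi R n H \<Longrightarrow> jacobi R n G"
    by (rule jacobi_subgroup_mono[OF _ assms(4-6)])
  show "jacobi R n G" if "n \<ge> 2 \<and> transpose 1 2 \<in> G"
  proof -
    have n: "n \<ge> 2" using that by simp
    have "{id, transpose 1 2} \<subseteq> G" using assms(5) that unfolding sym_subgroup_def by blast
    then show ?thesis
      by (rule jacobi_subgroup_mono[OF jacobi_transpose12_subgroup[OF n] sym_subgroup_transpose12[OF n] assms(5)])
  qed
  show "jacobi R n G" if "n \<ge> 3 \<and> cyc123 \<in> G"
  proof -
    have n: "n \<ge> 3" using that by simp
    have "{id, cyc123, cyc123 \<circ> cyc123} \<subseteq> G"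
      using assms(5) that unfolding sym_subgroup_def by blast
    then show ?thesis
      by (rule jacobi_subgroup_mono[OF jacobi_cyc123_subgroup[OF n] sym_subgroup_cyc123[OF n] assms(5)])
  qed
qed

end
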